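(* In the infinite-color urn model with parameters $\ell,s$ and initial cumulative counts $m_1,\dots,m_s$, for any $k>s$ and any positive integer $q$: (a) $\mathbb{E}M_k(n)^q\asymp n^{q\ell/(\ell+1)}$ as $n\to\infty$, i.e. the ratio is bounded above and below by positive constants not depending on $n$; (b) $\mathbb{E}\big\{M_k(n)(M_k(n)+1)\cdots(M_k(n)+\ell)\big\}=\big(m_s+(\ell+1)(k-s)+\ell\big)\,n^\ell\left(\frac{\ell+1}{\ell}\right)^{\ell}\big(1+O(n^{-1})\big)$ as $n\to\infty$; (c) $\displaystyle\limsup_{n\to\infty}\mathbb{E}\Big(\frac{n^{\ell/(\ell+1)}}{M_k(n)}\Big)<\infty$.
   Context: Infinite-color urn model: at time $0$ the urn contains balls of colors $1,\dots,s$ (at least one of each). Fix an integer $\ell\ge1$. At the $n$th step a ball is drawn uniformly at random and returned with one additional ball of the same color; if $n$ is a multiple of $\ell$, one ball of the new color $s+n/\ell$ is added after the $n$th draw. $M_k(n)$ is the number of balls with colors in $\{1,\dots,k\}$ after step $n$ is completed, and $m_k=M_k(0)$ (with $m_1\ge1$, $m_{k+1}-m_k\ge1$ for $k<s$). *)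

theory Defs
  imports "HOL-Probability.Probability" "HOL-Library.Landau_Symbols"
begin

text \<open>The urn is represented as a multiset of colours (positive naturals).
  The cumulative initial counts are m 1, ..., m s, with the convention m_0 = 0;
  colour k (1 <= k <= s) initially has m k - m (k-1) balls.\<close>

definition urn_init :: "nat \<Rightarrow> (nat \<Rightarrow> nat) \<Rightarrow> nat multiset" where
  "urn_init s m = (\<Sum>k\<in>{1..s}. replicate_mset (m k - (if k = 1 then 0 else m (k - 1))) k)"

definition urn_step :: "nat \<Rightarrow> nat \<Rightarrow> nat \<Rightarrow> nat multiset \<Rightarrow> nat multiset pmf" where
  "urn_step l s n U = map_pmf
     (\<lambda>x. U + {#x#} + (if l dvd n then {#s + n div l#} else {#})) (pmf_of_multiset U)"

primrec urn :: "nat \<Rightarrow> nat \<Rightarrow> (nat \<Rightarrow> nat) \<Rightarrow> nat \<Rightarrow> nat multiset pmf" where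
  "urn l s m 0 = return_pmf (urn_init s m)"
| "urn l s m (Suc n) = bind_pmf (urn l s m n) (urn_step l s (Suc n))"

definition Mk :: "nat \<Rightarrow> nat multiset \<Rightarrow> nat" where
  "Mk k U = size (filter_mset (\<lambda>c. 1 \<le> c \<and> c \<le> k) U)"

end

theory Submission
  imports Defs
begin

text \<open>
  Colour s + j is introduced at step j l, so after step n_full = (k - s) l every
  colour up to k is present, the urn contains no other colour, and every later new colour
  exceeds k.  Hence M_k(n_full) equals the (deterministic) total number of balls, and from
  then on M_k is a Polya chain: it grows by one with probability M_k / total n.  For any
  eigenfunction f of the increment, M (f(M+1) - f(M)) = c f(M), the expectation E f(M_k(n))
  is therefore multiplied by exactly 1 + c / total n in each step.

  Rising factorials (eigenvalue p) and reciprocal falling factorials (eigenvalue -(l+1)) are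
  such eigenfunctions.  The product of the factors 1 + (l+1)/total j has the closed form Q n,
  which is n^l ((l+1)/l)^l (1 + O(1/n)); this gives (b) exactly.  Bernoulli-type inequalities
  then compare M^q with the rising factorial of order q(l+1) (upper half of (a)) and
  n^(l/(l+1)) / M with the reciprocal falling factorial (part (c)); the lower half of (a)
  follows from (c) by a weighted AM-GM inequality.
\<close>

lemma sum_count_mset:
  "(\<Sum>x\<in>set_mset V. real (count V x) * h x) = (\<Sum>x\<in>#V. h x)"
proof (induction V)
  case (add a V)
  have "(\<Sum>x\<in>set_mset (add_mset a V). real (count (add_mset a V) x) * h x)
      = (\<Sum>x\<in>set_mset (add_mset a V). real (count V x) * h x + (if x = a then h a else 0))"
    by (intro sum.cong) (auto simp: algebra_simps)
  also have "\<dots> = (\<Sum>x\<in>set_mset (add_mset a V). real (count V x) * h x) + h a"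
    by (simp add: sum.distrib)
  also have "(\<Sum>x\<in>set_mset (add_mset a V). real (count V x) * h x)
      = (\<Sum>x\<in>set_mset V. real (count V x) * h x)"
    by (cases "a \<in># V") (auto simp: insert_absorb not_in_iff)
  finally show ?case using add by simp
qed simp

lemma expectation_pmf_of_multiset_if:
  fixes a b :: real
  assumes "V \<noteq> {#}"
  shows "measure_pmf.expectation (pmf_of_multiset V) (\<lambda>x. if P x then a else b)
       = (a * size (filter_mset P V) + b * (size V - size (filter_mset P V))) / size V"
proof -
  have "measure_pmf.expectation (pmf_of_multiset V) (\<lambda>x. if P x then a else b)
      = (\<Sum>x\<in>set_mset V. real (count V x) * (if P x then a else b)) / size V"
    using assms by (subst integral_measure_pmf[of "set_mset V"]) (auto simp: sum_divide_distrib)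
  also have "(\<Sum>x\<in>set_mset V. real (count V x) * (if P x then a else b))
      = a * size (filter_mset P V) + b * (size V - size (filter_mset P V))"
    unfolding sum_count_mset
    by (induction V) (auto simp: algebra_simps of_nat_diff Suc_diff_le)
  finally show ?thesis .
qed

lemma expectation_bind_pmf_finite:
  fixes f :: "_ \<Rightarrow> real"
  assumes "finite (set_pmf M)" "\<And>x. x \<in> set_pmf M \<Longrightarrow> finite (set_pmf (N x))"
  shows "measure_pmf.expectation (bind_pmf M N) f
       = measure_pmf.expectation M (\<lambda>x. measure_pmf.expectation (N x) f)"
  using assms
  by (simp add: pmf_expectation_bind[of "set_pmf M"] integral_measure_pmf[of "set_pmf M"] ac_simps)

subsection \<open>Rising factorials and elementary inequalities\<close>

lemma pochhammer_shift: "(x::real) \<noteq> 0 \<Longrightarrow> pochhammer (x + 1) j = pochhammer x j * (x + j) / x"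
  using pochhammer_rec[of x j] pochhammer_rec'[of x j] by (simp add: field_simps)

text \<open>Rising factorials are eigenfunctions of the Polya increment:
  M ((M+1)^(p) - M^(p)) = p M^(p).\<close>

lemma rising_factorial_increment:
  "real M * (pochhammer (real (M + 1)) p - pochhammer (real M) p) = real p * pochhammer (real M) p"
  using pochhammer_rec[of "real M" p] pochhammer_rec'[of "real M" p] by (simp add: algebra_simps)

text \<open>The reciprocal of the falling factorial of order j below M.  It is an eigenfunction of
  the same increment with eigenvalue -j, which controls negative moments.\<close>

definition recip_falling :: "nat \<Rightarrow> nat \<Rightarrow> real" where
  "recip_falling j M = 1 / pochhammer (real M - real j) j"

lemma recip_falling_increment:
  assumes "M > j"
  shows "real M * (recip_falling j (M + 1) - recip_falling j M) = - real j * recip_falling j M"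
proof -
  define a where "a = real M - real j"
  have a: "a > 0" using assms unfolding a_def by simp
  have shift: "pochhammer (a + 1) j = pochhammer a j * (a + real j) / a"
    using pochhammer_shift a by simp
  have pos: "pochhammer a j > 0" "pochhammer (a + 1) j > 0"
    using a by (auto intro!: pochhammer_pos)
  have next_val: "recip_falling j (M + 1) = 1 / pochhammer (a + 1) j"
    unfolding recip_falling_def a_def by (simp add: algebra_simps)
  have vals: "recip_falling j M = 1 / pochhammer a j" "real M = a + real j"
    unfolding recip_falling_def a_def by simp_all
  show ?thesis unfolding next_val vals using shift pos a by (simp add: field_simps)
qed

lemma recip_falling_pos: "M > j \<Longrightarrow> recip_falling j M > 0"
  unfolding recip_falling_def by (intro divide_pos_pos pochhammer_pos) auto

lemma pochhammer_ge_power: "(x::real) \<ge> 0 \<Longrightarrow> x ^ n \<le> pochhammer x n"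
proof -
  assume x: "x \<ge> 0"
  have "x ^ n = (\<Prod>i\<in>{0..<n}. x)" by simp
  also have "\<dots> \<le> (\<Prod>i\<in>{0..<n}. x + of_nat i)" by (intro prod_mono) (use x in auto)
  finally show ?thesis by (simp add: pochhammer_prod)
qed

lemma pochhammer_le_power: "(x::real) \<ge> 0 \<Longrightarrow> pochhammer x n \<le> (x + n) ^ n"
proof -
  assume x: "x \<ge> 0"
  have "pochhammer x n = (\<Prod>i\<in>{0..<n}. x + of_nat i)" by (simp add: pochhammer_prod)
  also have "\<dots> \<le> (\<Prod>i\<in>{0..<n}. x + n)" by (intro prod_mono) (use x in auto)
  finally show ?thesis by simp
qed

lemma recip_falling_ge:
  assumes "M > j" shows "1 / real M ^ j \<le> recip_falling j M"
proof -
  have a: "real M - real j > 0" using assms by simp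
  have "pochhammer (real M - real j) j \<le> real M ^ j"
    using pochhammer_le_power[of "real M - real j" j] a by simp
  then show ?thesis
    unfolding recip_falling_def using pochhammer_pos[OF a, of j] assms by (intro divide_left_mono) auto
qed

lemma one_plus_power_le: "0 \<le> (e::real) \<Longrightarrow> e \<le> 1 \<Longrightarrow> (1 + e) ^ j \<le> 1 + (2 ^ j - 1) * e"
proof (induction j)
  case (Suc j)
  have "(1 + e) ^ Suc j \<le> (1 + (2 ^ j - 1) * e) * (1 + e)"
    using Suc by (simp add: mult_right_mono)
  also have "\<dots> = 1 + 2 ^ j * e + (2 ^ j - 1) * (e * e)" by (simp add: algebra_simps)
  also have "\<dots> \<le> 1 + 2 ^ j * e + (2 ^ j - 1) * e"
    using Suc.prems by (intro add_left_mono mult_left_mono mult_right_le_one_le) auto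
  also have "\<dots> = 1 + (2 ^ Suc j - 1) * e" by (simp add: algebra_simps)
  finally show ?case .
qed simp

lemma amgm_power: "(y::real) \<ge> 0 \<Longrightarrow> real (Suc j) * y \<le> y ^ Suc j + real j"
  using Bernoulli_inequality[of "y - 1" "Suc j"] by (simp add: algebra_simps)

lemma amgm_reciprocal:
  assumes "(x::real) > 0" shows "real q + 1 \<le> x ^ q + real q / x"
proof -
  have "(real q + 1) * x \<le> x ^ q * x + real q"
    using Bernoulli_inequality[of "x - 1" "Suc q"] assms by (simp add: algebra_simps)
  then show ?thesis using assms by (simp add: field_simps)
qed

section \<open>The urn model\<close>

locale colour_urn =
  fixes l s k :: nat and m :: "nat \<Rightarrow> nat"
  assumes l_pos: "l \<ge> 1" and s_pos: "s \<ge> 1" and m1_pos: "m 1 \<ge> 1"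
    and m_strict: "\<And>j. 1 \<le> j \<Longrightarrow> j < s \<Longrightarrow> m (Suc j) - m j \<ge> 1"
    and k_gt_s: "k > s"
begin

text \<open>Total number of balls after step n (deterministic), and the step after which every
  colour up to k has been introduced.\<close>

definition total :: "nat \<Rightarrow> nat" where "total n = m s + n + n div l"

definition n_full :: nat where "n_full = (k - s) * l"

definition EM :: "nat \<Rightarrow> (nat \<Rightarrow> real) \<Rightarrow> real" where
  "EM n f = measure_pmf.expectation (urn l s m n) (\<lambda>U. f (Mk k U))"

lemma initial_counts_telescope:
  "1 \<le> t \<Longrightarrow> t \<le> s \<Longrightarrow>
     m 1 \<le> m t \<and> (\<Sum>j\<in>{1..t}. m j - (if j = 1 then 0 else m (j - 1))) = m t"
proof (induction t)
  case (Suc t)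
  show ?case
  proof (cases "t = 0")
    case False
    with Suc have "m 1 \<le> m t \<and> (\<Sum>j\<in>{1..t}. m j - (if j = 1 then 0 else m (j - 1))) = m t"
      by auto
    moreover have "m t < m (Suc t)" using m_strict[of t] Suc False by auto
    moreover have "{1..Suc t} = insert (Suc t) {1..t}" by auto
    ultimately show ?thesis using False by simp
  qed simp
qed simp

lemma m_s_pos: "m s \<ge> 1"
  using initial_counts_telescope[of s] s_pos m1_pos by auto

lemma total_Suc: "total (Suc n) = total n + 1 + (if l dvd Suc n then 1 else 0)"
  unfolding total_def using div_Suc[of n l] l_pos by (auto simp: dvd_eq_mod_eq_0)

lemma total_pos: "total n \<ge> 1"
  using m_s_pos unfolding total_def by simp

lemma total_mono: "a \<le> b \<Longrightarrow> total a \<le> total b"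
  unfolding total_def by (simp add: add_mono div_le_mono)

lemma urn_support:
  "U \<in> set_pmf (urn l s m n) \<Longrightarrow> size U = total n \<and> set_mset U \<subseteq> {1..s + n div l}"
proof (induction n arbitrary: U)
  case 0
  have "size (urn_init s m) = m s"
    unfolding urn_init_def using initial_counts_telescope[of s] s_pos by simp
  moreover have "set_mset (urn_init s m) \<subseteq> {1..s}"
    unfolding urn_init_def by (auto simp: set_mset_sum split: if_splits)
  ultimately show ?case using 0 by (simp add: total_def)
next
  case (Suc n)
  from Suc.prems obtain V where V: "V \<in> set_pmf (urn l s m n)"
    and U: "U \<in> set_pmf (urn_step l s (Suc n) V)" by auto
  have V_size: "size V = total n" and V_set: "set_mset V \<subseteq> {1..s + n div l}"
    using Suc.IH[OF V] by auto
  then have "V \<noteq> {#}" using total_pos[of n] by auto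
  with U obtain x where x: "x \<in># V"
    and U_eq: "U = V + {#x#} + (if l dvd Suc n then {#s + Suc n div l#} else {#})"
    unfolding urn_step_def by auto
  have "{1..s + n div l} \<subseteq> {1..s + Suc n div l}" by (simp add: div_le_mono)
  then have "set_mset V \<subseteq> {1..s + Suc n div l}" using V_set by blast
  moreover have "l dvd Suc n \<Longrightarrow> Suc n div l \<ge> 1"
    using l_pos dvd_imp_le[of l "Suc n"] by (simp add: Suc_le_eq div_greater_zero_iff)
  ultimately show ?case using V_size x unfolding U_eq by (auto simp: total_Suc)
qed

lemma urn_nonempty: "U \<in> set_pmf (urn l s m n) \<Longrightarrow> U \<noteq> {#}"
  using urn_support[of U n] total_pos[of n] by auto

lemma urn_finite_support: "finite (set_pmf (urn l s m n))"
proof (induction n)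
  case (Suc n)
  have "finite (set_pmf (urn_step l s (Suc n) V))" if "V \<in> set_pmf (urn l s m n)" for V
    using urn_nonempty[OF that] unfolding urn_step_def by simp
  then show ?case using Suc by simp
qed simp

subsection \<open>From step n_full on, M_k is a Polya chain\<close>

lemma Mk_add [simp]: "Mk k (U + V) = Mk k U + Mk k V"
  unfolding Mk_def by simp

lemma Mk_empty [simp]: "Mk k {#} = 0"
  unfolding Mk_def by simp

lemma Mk_add_mset [simp]: "Mk k (add_mset x U) = Mk k U + (if 1 \<le> x \<and> x \<le> k then 1 else 0)"
  unfolding Mk_def by simp

text \<open>At step n_full the urn contains only colours up to k, so M_k is deterministic.\<close>

lemma Mk_at_full: "U \<in> set_pmf (urn l s m n_full) \<Longrightarrow> Mk k U = total n_full"
proof -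
  assume U: "U \<in> set_pmf (urn l s m n_full)"
  have "s + n_full div l = k" unfolding n_full_def using l_pos k_gt_s by simp
  then have "set_mset U \<subseteq> {1..k}" using urn_support[OF U] by simp
  then have "filter_mset (\<lambda>c. 1 \<le> c \<and> c \<le> k) U = U" by (auto simp: filter_mset_eq_conv)
  then show ?thesis using urn_support[OF U] unfolding Mk_def by simp
qed

lemma Mk_ge_full: "n \<ge> n_full \<Longrightarrow> U \<in> set_pmf (urn l s m n) \<Longrightarrow> Mk k U \<ge> total n_full"
proof (induction n arbitrary: U rule: dec_induct)
  case base then show ?case using Mk_at_full by simp
next
  case (step n)
  from step.prems obtain V where V: "V \<in> set_pmf (urn l s m n)"
    and U: "U \<in> set_pmf (urn_step l s (Suc n) V)" by auto
  from U urn_nonempty[OF V] obtain x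
    where "U = V + {#x#} + (if l dvd Suc n then {#s + Suc n div l#} else {#})"
    unfolding urn_step_def by auto
  then have "Mk k V \<le> Mk k U" by simp
  then show ?case using step.IH[OF V] by simp
qed

lemma Mk_new_colour:
  assumes "n \<ge> n_full"
  shows "Mk k (if l dvd Suc n then {#s + Suc n div l#} else {#}) = 0"
proof (cases "l dvd Suc n")
  case True
  then obtain d where d: "Suc n = l * d" by blast
  have "(k - s) * l < l * d" using assms d unfolding n_full_def by linarith
  then have "d > k - s" by (simp add: mult.commute)
  moreover have "Suc n div l = d" using d l_pos by simp
  ultimately show ?thesis using True k_gt_s by simp
qed simp

lemma urn_step_expectation:
  assumes "n \<ge> n_full" and V: "V \<in> set_pmf (urn l s m n)"
  shows "measure_pmf.expectation (urn_step l s (Suc n) V) (\<lambda>U. f (Mk k U))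
      = f (Mk k V) + real (Mk k V) / real (total n) * (f (Mk k V + 1) - f (Mk k V))"
proof -
  have "measure_pmf.expectation (urn_step l s (Suc n) V) (\<lambda>U. f (Mk k U))
      = measure_pmf.expectation (pmf_of_multiset V)
          (\<lambda>x. if 1 \<le> x \<and> x \<le> k then f (Mk k V + 1) else f (Mk k V))"
    unfolding urn_step_def integral_map_pmf Mk_add Mk_new_colour[OF assms(1)]
    by (intro Bochner_Integration.integral_cong) auto
  also have "\<dots> = (f (Mk k V + 1) * Mk k V + f (Mk k V) * (size V - Mk k V)) / size V"
    by (simp add: expectation_pmf_of_multiset_if[OF urn_nonempty[OF V]] Mk_def)
  also have "\<dots> = f (Mk k V) + real (Mk k V) / real (total n) * (f (Mk k V + 1) - f (Mk k V))"
  proof -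
    have "Mk k V \<le> size V" unfolding Mk_def by simp
    then show ?thesis using urn_support[OF V] total_pos[of n] by (simp add: of_nat_diff field_simps)
  qed
  finally show ?thesis .
qed

lemma polya_step:
  assumes "n \<ge> n_full"
  shows "EM (Suc n) f = measure_pmf.expectation (urn l s m n)
     (\<lambda>U. f (Mk k U) + real (Mk k U) / real (total n) * (f (Mk k U + 1) - f (Mk k U)))"
proof -
  have "EM (Suc n) f = measure_pmf.expectation (urn l s m n)
          (\<lambda>V. measure_pmf.expectation (urn_step l s (Suc n) V) (\<lambda>U. f (Mk k U)))"
    unfolding EM_def urn.simps
    by (rule expectation_bind_pmf_finite[OF urn_finite_support])
       (auto simp: urn_step_def dest: urn_nonempty)
  also have "\<dots> = measure_pmf.expectation (urn l s m n)
     (\<lambda>U. f (Mk k U) + real (Mk k U) / real (total n) * (f (Mk k U + 1) - f (Mk k U)))"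
    by (intro integral_cong_AE AE_pmfI) (simp_all add: urn_step_expectation[OF assms])
  finally show ?thesis .
qed

lemma EM_eigen_step:
  assumes "n \<ge> n_full"
    and "\<And>M. M \<ge> total n_full \<Longrightarrow> real M * (f (M + 1) - f M) = c * f M"
  shows "EM (Suc n) f = (1 + c / real (total n)) * EM n f"
proof -
  have "EM (Suc n) f
      = measure_pmf.expectation (urn l s m n) (\<lambda>U. (1 + c / real (total n)) * f (Mk k U))"
    unfolding polya_step[OF assms(1)]
  proof (intro integral_cong_AE AE_pmfI)
    fix U assume "U \<in> set_pmf (urn l s m n)"
    then have "real (Mk k U) * (f (Mk k U + 1) - f (Mk k U)) = c * f (Mk k U)"
      using assms(2) Mk_ge_full[OF assms(1)] by blast
    then show "f (Mk k U) + real (Mk k U) / real (total n) * (f (Mk k U + 1) - f (Mk k U))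
       = (1 + c / real (total n)) * f (Mk k U)" by (simp add: algebra_simps)
  qed simp_all
  then show ?thesis unfolding EM_def by simp
qed

lemma EM_add: "EM n (\<lambda>M. f M + g M) = EM n f + EM n g"
  unfolding EM_def by (simp add: integrable_measure_pmf_finite[OF urn_finite_support])

lemma EM_scale: "EM n (\<lambda>M. a * f M) = a * EM n f"
  unfolding EM_def by simp

lemma EM_const: "EM n (\<lambda>M. c) = c"
  unfolding EM_def by simp

lemma EM_mono:
  assumes "n \<ge> n_full" "\<And>M. M \<ge> total n_full \<Longrightarrow> f M \<le> g M" shows "EM n f \<le> EM n g"
  unfolding EM_def
  by (intro integral_mono_AE integrable_measure_pmf_finite[OF urn_finite_support] AE_pmfI)
     (use assms Mk_ge_full in auto)

lemma EM_nonneg: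
  assumes "n \<ge> n_full" "\<And>M. M \<ge> total n_full \<Longrightarrow> f M \<ge> 0" shows "EM n f \<ge> 0"
  unfolding EM_def by (intro integral_nonneg_AE AE_pmfI) (use assms Mk_ge_full in auto)

lemma EM_at_full: "EM n_full f = f (total n_full)"
proof -
  have "EM n_full f = measure_pmf.expectation (urn l s m n_full) (\<lambda>U. f (total n_full))"
    unfolding EM_def by (intro integral_cong_AE AE_pmfI) (simp_all add: Mk_at_full)
  then show ?thesis by simp
qed

subsection \<open>The deterministic growth factor\<close>

text \<open>Q solves Q (n+1) = (1 + (l+1) / total n) Q n in closed form; it is of order n^l.\<close>

definition Q :: "nat \<Rightarrow> real" where
  "Q n = pochhammer (real (total n)) (l + 1) / (real (total n) + real l - real (n mod l))"

lemma mod_l_less: "n mod l < l"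
  using l_pos by simp

lemma Q_denominator_bounds:
  "real (total n) + 1 \<le> real (total n) + real l - real (n mod l)"
  "real (total n) + real l - real (n mod l) \<le> real (total n) + real l"
  using mod_l_less[of n] by auto

lemma Q_pos: "Q n > 0"
  unfolding Q_def using total_pos[of n] Q_denominator_bounds(1)[of n]
  by (intro divide_pos_pos pochhammer_pos) auto

lemma Q_Suc: "Q (Suc n) = Q n * (1 + real (l + 1) / real (total n))"
proof -
  define t where "t = real (total n)"
  define D where "D = t + real l - real (n mod l)"
  have t: "t \<ge> 1" unfolding t_def using total_pos[of n] by simp
  have D: "D \<ge> t + 1" unfolding D_def t_def using Q_denominator_bounds(1)[of n] by simp
  have Qn: "Q n = pochhammer t (l + 1) / D" unfolding Q_def t_def D_def ..
  have shift: "pochhammer (t + 1) (l + 1) = Q n * (1 + real (l + 1) / t) * D"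
    unfolding Qn using t D pochhammer_shift[of t "l + 1"] by (simp add: field_simps)
  show ?thesis
  proof (cases "l dvd Suc n")
    case True
    then have "n mod l = l - 1" "Suc n mod l = 0"
      using l_pos mod_Suc[of n l] mod_l_less[of n] by (auto simp: dvd_eq_mod_eq_0 split: if_splits)
    moreover have "real (total (Suc n)) = t + 2" unfolding t_def using True by (simp add: total_Suc)
    ultimately have Q_next: "Q (Suc n) = pochhammer (t + 2) (l + 1) / (t + 2 + real l)"
      and D_eq: "D = t + 1"
      unfolding Q_def D_def t_def using l_pos by (simp_all add: of_nat_diff)
    have "pochhammer (t + 2) (l + 1) = pochhammer (t + 1) (l + 1) * (t + 2 + real l) / (t + 1)"
      using pochhammer_shift[of "t + 1" "l + 1"] t by (simp add: add.assoc algebra_simps)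
    then have "Q (Suc n) = pochhammer (t + 1) (l + 1) / (t + 1)"
      unfolding Q_next using t by simp
    then show ?thesis using t unfolding t_def[symmetric] shift D_eq by simp
  next
    case False
    then have "Suc n mod l = Suc (n mod l)"
      using l_pos mod_Suc[of n l] by (auto simp: dvd_eq_mod_eq_0 split: if_splits)
    moreover have "real (total (Suc n)) = t + 1" unfolding t_def using False by (simp add: total_Suc)
    ultimately have "Q (Suc n) = pochhammer (t + 1) (l + 1) / D"
      unfolding Q_def D_def t_def by simp
    then show ?thesis using D t unfolding t_def[symmetric] shift by simp
  qed
qed

lemma Q_lower: "Q n \<ge> real (total n) ^ l"
proof -
  define t where "t = real (total n)"
  define D where "D = t + real l - real (n mod l)"
  have t: "t \<ge> 1" unfolding t_def using total_pos[of n] by simp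
  have D: "t + 1 \<le> D" "D \<le> t + real l" using Q_denominator_bounds[of n] unfolding D_def t_def by auto
  have "t ^ l * D \<le> pochhammer t l * (t + real l)"
    using pochhammer_ge_power[of t l] pochhammer_nonneg[of t l] t D by (intro mult_mono) auto
  moreover have "Q n = pochhammer t l * (t + real l) / D"
    unfolding Q_def t_def[symmetric] D_def[symmetric] by (simp add: pochhammer_rec' ac_simps)
  ultimately show ?thesis using D t unfolding t_def[symmetric] by (simp add: le_divide_eq)
qed

lemma Q_upper: "Q n \<le> (real (total n) + real l + 1) ^ l"
proof -
  define t where "t = real (total n)"
  define D where "D = t + real l - real (n mod l)"
  have t: "t \<ge> 1" unfolding t_def using total_pos[of n] by simp
  have D: "t + 1 \<le> D" using Q_denominator_bounds[of n] unfolding D_def t_def by auto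
  have "t * pochhammer (t + 1) l \<le> D * (t + real l + 1) ^ l"
    using pochhammer_le_power[of "t + 1" l] pochhammer_nonneg[of "t + 1" l] t D
    by (intro mult_mono) (auto simp: ac_simps)
  moreover have "Q n = t * pochhammer (t + 1) l / D"
    unfolding Q_def t_def[symmetric] D_def[symmetric] by (simp add: pochhammer_rec ac_simps)
  ultimately show ?thesis using D t unfolding t_def[symmetric] by (simp add: divide_le_eq mult.commute)
qed

lemma total_lower: "real (total n) \<ge> real n * (real l + 1) / real l"
proof -
  have "l \<le> l * m s" using m_s_pos by simp
  moreover have "n = l * (n div l) + n mod l" by simp
  ultimately have "n \<le> l * m s + l * (n div l)"
    using mod_l_less[of n] by linarith
  then have "real n \<le> real l * real (m s) + real l * real (n div l)"
    by (metis of_nat_add of_nat_le_iff of_nat_mult)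
  then show ?thesis using l_pos unfolding total_def by (simp add: field_simps)
qed

lemma total_upper: "real (total n) \<le> real n * (real l + 1) / real l + real (m s)"
proof -
  have "real (n div l) * real l \<le> real n"
    by (metis div_times_less_eq_dividend of_nat_le_iff of_nat_mult)
  then have "real (n div l) \<le> real n / real l" using l_pos by (simp add: le_divide_eq)
  then show ?thesis using l_pos unfolding total_def by (simp add: field_simps)
qed

lemma total_full: "total n_full = m s + (l + 1) * (k - s)"
  unfolding total_def n_full_def using l_pos by simp

lemma total_full_ge: "total n_full \<ge> l + 2"
proof -
  have "(l + 1) * 1 \<le> (l + 1) * (k - s)" using k_gt_s by (intro mult_le_mono2) simp
  then have "l + 1 \<le> (l + 1) * (k - s)" by simp
  then show ?thesis using total_full m_s_pos by linarith
qed

lemma n_full_ge: "n_full \<ge> l"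
  unfolding n_full_def using k_gt_s l_pos by auto

lemma total_minus_l: "n \<ge> l \<Longrightarrow> total (n - l) + (l + 1) = total n"
  unfolding total_def using le_div_geq[of l n] l_pos by simp

lemma EM_rising_factorial:
  "n \<ge> n_full \<Longrightarrow> EM n (\<lambda>M. pochhammer (real M) (l + 1)) = (real (total n_full) + real l) * Q n"
proof (induction n rule: dec_induct)
  case base
  have "Q n_full = pochhammer (real (total n_full)) (l + 1) / (real (total n_full) + real l)"
    unfolding Q_def n_full_def by simp
  then show ?case unfolding EM_at_full using total_pos[of n_full] by simp
next
  case (step n)
  have "EM (Suc n) (\<lambda>M. pochhammer (real M) (l + 1))
      = (1 + real (l + 1) / real (total n)) * EM n (\<lambda>M. pochhammer (real M) (l + 1))"
    by (rule EM_eigen_step[OF step.hyps(1)]) (rule rising_factorial_increment)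
  then show ?case using step.IH by (simp add: Q_Suc)
qed

lemma EM_recip_falling:
  "n \<ge> n_full \<Longrightarrow> EM n (recip_falling (l + 1)) * Q (n - l)
                  = EM n_full (recip_falling (l + 1)) * Q (n_full - l)"
proof (induction n rule: dec_induct)
  case (step n)
  define a where "a = real (total n)"
  define b where "b = real (l + 1)"
  have ab: "a - b > 0"
    using total_mono[OF step.hyps(1)] total_full_ge unfolding a_def b_def by simp
  have a_pos: "a > 0" using ab unfolding b_def by simp
  have "EM (Suc n) (recip_falling (l + 1)) = (1 + (- b) / a) * EM n (recip_falling (l + 1))"
    unfolding a_def b_def
    by (rule EM_eigen_step[OF step.hyps(1)]) (rule recip_falling_increment, use total_full_ge in linarith)
  also have "1 + (- b) / a = (a - b) / a" using a_pos by (simp add: field_simps)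
  finally have EM_next: "EM (Suc n) (recip_falling (l + 1)) = (a - b) / a * EM n (recip_falling (l + 1))" .
  have "n \<ge> l" using step.hyps(1) n_full_ge by simp
  then have "real (total (n - l)) + b = a"
    using total_minus_l unfolding a_def b_def by (metis of_nat_add)
  then have "real (total (n - l)) = a - b" by simp
  then have "Q (Suc n - l) = Q (n - l) * (1 + b / (a - b))"
    using Q_Suc[of "n - l"] \<open>n \<ge> l\<close> unfolding b_def by (simp add: Suc_diff_le)
  also have "1 + b / (a - b) = a / (a - b)" using ab by (simp add: field_simps)
  finally have Q_next: "Q (Suc n - l) = Q (n - l) * (a / (a - b))" .
  have "EM (Suc n) (recip_falling (l + 1)) * Q (Suc n - l)
      = EM n (recip_falling (l + 1)) * Q (n - l) * ((a - b) / a * (a / (a - b)))"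
    unfolding EM_next Q_next by (simp add: ac_simps)
  also have "(a - b) / a * (a / (a - b)) = 1" using ab a_pos by simp
  finally show ?case using step.IH by simp
qed simp

text \<open>Higher rising factorials satisfy the same recursion with eigenvalue q(l+1), which by
  Bernoulli's inequality grows at most like the q-th power of Q.\<close>

lemma EM_rising_factorial_power:
  "n \<ge> n_full \<Longrightarrow> EM n (\<lambda>M. pochhammer (real M) (q * (l + 1)))
     \<le> pochhammer (real (total n_full)) (q * (l + 1)) * (Q n / Q n_full) ^ q"
proof (induction n rule: dec_induct)
  case base then show ?case using Q_pos[of n_full] by (simp add: EM_at_full)
next
  case (step n)
  define y where "y = real (l + 1) / real (total n)"
  have y: "y \<ge> 0" unfolding y_def by simp
  have eigenvalue: "real (q * (l + 1)) / real (total n) = real q * y"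
    unfolding y_def by (simp add: algebra_simps)
  have "EM (Suc n) (\<lambda>M. pochhammer (real M) (q * (l + 1)))
      = (1 + real (q * (l + 1)) / real (total n)) * EM n (\<lambda>M. pochhammer (real M) (q * (l + 1)))"
    by (rule EM_eigen_step[OF step.hyps(1)]) (rule rising_factorial_increment)
  also have "\<dots> \<le> (1 + y) ^ q * EM n (\<lambda>M. pochhammer (real M) (q * (l + 1)))"
    unfolding eigenvalue using Bernoulli_inequality[of y q] y step.hyps(1) total_pos[of n_full]
    by (intro mult_right_mono EM_nonneg) (auto intro!: pochhammer_nonneg)
  also have "\<dots> \<le> (1 + y) ^ q * (pochhammer (real (total n_full)) (q * (l + 1)) * (Q n / Q n_full) ^ q)"
    using step.IH y by (intro mult_left_mono) auto
  also have "\<dots> = pochhammer (real (total n_full)) (q * (l + 1)) * (Q (Suc n) / Q n_full) ^ q"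
    unfolding Q_Suc y_def[symmetric] by (simp add: power_mult_distrib power_divide ac_simps)
  finally show ?case .
qed

subsection \<open>Asymptotics\<close>

definition scale :: "nat \<Rightarrow> real" where "scale n = real n powr (real l / real (l + 1))"

lemma scale_pos: "n > 0 \<Longrightarrow> scale n > 0"
  unfolding scale_def by simp

lemma scale_power: "n > 0 \<Longrightarrow> scale n ^ j = real n powr (real j * real l / real (l + 1))"
  unfolding scale_def by (subst powr_power) auto

lemma scale_power_Suc_l: "n > 0 \<Longrightarrow> scale n ^ (l + 1) = real n ^ l"
  using scale_power[of n "l + 1"] by (simp add: powr_realpow)

lemma total_le_linear: "n \<ge> m s + l + 1 \<Longrightarrow> real (total n) + real l + 1 \<le> 3 * real n"
proof -
  assume n: "n \<ge> m s + l + 1"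
  have "real n * 1 \<le> real n * real l" using l_pos by (intro mult_left_mono) auto
  then have "real n * (real l + 1) / real l \<le> 2 * real n"
    using l_pos by (simp add: divide_le_eq algebra_simps)
  moreover have "real (m s) + real l + 1 \<le> real n" using n by linarith
  ultimately show ?thesis using total_upper[of n] by linarith
qed

lemma Q_relative_error:
  assumes n: "n \<ge> m s + l + 1"
  shows "\<bar>Q n / (real n * (real (l + 1) / real l)) ^ l - 1\<bar> \<le> 2 ^ l * (real (m s) + real l + 1) / real n"
proof -
  define c where "c = real (m s) + real l + 1"
  define x where "x = real n * (real (l + 1) / real l)"
  have n_ge_c: "real n \<ge> c" unfolding c_def using n by linarith
  have c1: "c \<ge> 1" unfolding c_def by simp
  have n_pos: "real n > 0" using n_ge_c c1 by simp
  have x_ge_n: "x \<ge> real n" unfolding x_def using l_pos n_pos by (simp add: field_simps)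
  have x_pos: "x > 0" using x_ge_n n_pos by simp
  have "x ^ l \<le> Q n"
    using power_mono[OF _ , of x "real (total n)" l] total_lower[of n] x_pos Q_lower[of n]
    unfolding x_def by (simp add: field_simps)
  then have lower: "1 \<le> Q n / x ^ l" using x_pos by simp
  have "real (total n) + real l + 1 \<le> x + c"
    using total_upper[of n] unfolding x_def c_def by (simp add: field_simps)
  then have "Q n \<le> (x + c) ^ l" using Q_upper[of n] power_mono[of _ "x + c" l] by force
  then have "Q n / x ^ l \<le> (x + c) ^ l / x ^ l"
    using x_pos by (simp add: divide_right_mono)
  also have "\<dots> = ((x + c) / x) ^ l" by (simp add: power_divide)
  also have "\<dots> = (1 + c / x) ^ l" using x_pos by (simp add: field_simps)
  also have "\<dots> \<le> 1 + (2 ^ l - 1) * (c / x)"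
    using c1 x_pos x_ge_n n_ge_c by (intro one_plus_power_le) (auto simp: divide_le_eq)
  also have "\<dots> \<le> 1 + 2 ^ l * (c / real n)"
    using c1 x_pos x_ge_n n_pos
    by (intro add_left_mono mult_mono divide_left_mono) auto
  finally show ?thesis using lower unfolding x_def c_def by simp
qed

lemma rising_factorial_asymptotics:
  "\<exists>r. r \<in> O(\<lambda>n. 1 / real n) \<and> (\<forall>\<^sub>F n in at_top. EM n (\<lambda>M. pochhammer (real M) (l + 1))
      = (real (total n_full) + real l) * real n ^ l * (real (l + 1) / real l) ^ l * (1 + r n))"
proof (intro exI conjI)
  define r where "r n = Q n / (real n * (real (l + 1) / real l)) ^ l - 1" for n
  show "r \<in> O(\<lambda>n. 1 / real n)"
    by (intro bigoI[where c = "2 ^ l * (real (m s) + real l + 1)"]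
          eventually_mono[OF eventually_ge_at_top[of "m s + l + 1"]])
       (use Q_relative_error in \<open>auto simp: r_def\<close>)
  show "\<forall>\<^sub>F n in at_top. EM n (\<lambda>M. pochhammer (real M) (l + 1))
      = (real (total n_full) + real l) * real n ^ l * (real (l + 1) / real l) ^ l * (1 + r n)"
  proof (intro eventually_mono[OF eventually_ge_at_top[of "max n_full 1"]])
    fix n assume n: "max n_full 1 \<le> n"
    then have "(real n * (real (l + 1) / real l)) ^ l \<noteq> 0" using l_pos by simp
    then have "Q n = (real n * (real (l + 1) / real l)) ^ l * (1 + r n)" by (simp add: r_def)
    then have "Q n = real n ^ l * (real (l + 1) / real l) ^ l * (1 + r n)"
      by (simp only: power_mult_distrib)
    then show "EM n (\<lambda>M. pochhammer (real M) (l + 1))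
      = (real (total n_full) + real l) * real n ^ l * (real (l + 1) / real l) ^ l * (1 + r n)"
      using EM_rising_factorial[of n] n by (simp add: ac_simps)
  qed
qed

lemma recip_falling_moment_bound:
  "\<exists>C\<ge>0. \<forall>\<^sub>F n in at_top. real n ^ l * EM n (recip_falling (l + 1)) \<le> C"
proof (intro exI conjI)
  define cG where "cG = EM n_full (recip_falling (l + 1)) * Q (n_full - l)"
  have "EM n_full (recip_falling (l + 1)) \<ge> 0"
  proof (rule EM_nonneg)
    fix M assume "M \<ge> total n_full"
    then show "recip_falling (l + 1) M \<ge> 0"
      using recip_falling_pos[of "l + 1" M] total_full_ge by simp
  qed simp
  then have cG: "cG \<ge> 0" unfolding cG_def using Q_pos[of "n_full - l"] by simp
  then show "2 ^ l * cG \<ge> 0" by simp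
  show "\<forall>\<^sub>F n in at_top. real n ^ l * EM n (recip_falling (l + 1)) \<le> 2 ^ l * cG"
  proof (intro eventually_mono[OF eventually_ge_at_top[of "max n_full (2 * l)"]])
    fix n assume n: "max n_full (2 * l) \<le> n"
    then have EM_n: "EM n (recip_falling (l + 1)) = cG / Q (n - l)"
      using EM_recip_falling[of n] Q_pos[of "n - l"] unfolding cG_def by (simp add: field_simps)
    have "real n / 2 \<le> real (total (n - l))"
      using n unfolding total_def by (simp add: of_nat_diff)
    then have "(real n / 2) ^ l \<le> Q (n - l)"
      using Q_lower[of "n - l"] power_mono[of "real n / 2" _ l] by force
    then have "cG / Q (n - l) \<le> cG / (real n / 2) ^ l"
      using cG Q_pos[of "n - l"] n l_pos by (intro divide_left_mono mult_pos_pos) auto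
    then show "real n ^ l * EM n (recip_falling (l + 1)) \<le> 2 ^ l * cG"
      unfolding EM_n using n l_pos by (simp add: power_divide field_simps)
  qed
qed

text \<open>Part (c) for EM: the normalised inverse moment E n^(l/(l+1)) / M_k(n) stays bounded.
  Pointwise, (l+1) y \<le> y^(l+1) + l with y = scale n / M, and y^(l+1) \<le> n^l / (M)_(l+1).\<close>

lemma inverse_moment_bound: "\<exists>B>0. \<forall>\<^sub>F n in at_top. EM n (\<lambda>M. scale n / real M) \<le> B"
proof -
  obtain C where C: "C \<ge> 0" and ev: "\<forall>\<^sub>F n in at_top. real n ^ l * EM n (recip_falling (l + 1)) \<le> C"
    using recip_falling_moment_bound by blast
  have "\<forall>\<^sub>F n in at_top. EM n (\<lambda>M. scale n / real M) \<le> (C + real l) / real (l + 1)"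
    using ev eventually_ge_at_top[of "max n_full 1"]
  proof eventually_elim
    case (elim n)
    then have n: "n \<ge> n_full" "n > 0" by auto
    have pointwise: "scale n / real M
        \<le> real n ^ l / real (l + 1) * recip_falling (l + 1) M + real l / real (l + 1)"
      if M: "M \<ge> total n_full" for M
    proof -
      define y where "y = scale n / real M"
      have M_gt: "M > l + 1" using M total_full_ge by simp
      have "real (Suc l) * y \<le> y ^ Suc l + real l"
        using scale_pos[OF n(2)] unfolding y_def by (intro amgm_power) simp
      also have "y ^ Suc l = real n ^ l * (1 / real M ^ (l + 1))"
        using scale_power_Suc_l[OF n(2)] unfolding y_def by (simp add: power_divide)
      also have "\<dots> \<le> real n ^ l * recip_falling (l + 1) M"
        using recip_falling_ge[OF M_gt] by (intro mult_left_mono) auto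
      finally have "y \<le> (real n ^ l * recip_falling (l + 1) M + real l) / real (l + 1)"
        by (simp add: pos_le_divide_eq mult.commute)
      then show ?thesis unfolding y_def by (simp add: add_divide_distrib)
    qed
    have "EM n (\<lambda>M. scale n / real M)
        \<le> real n ^ l / real (l + 1) * EM n (recip_falling (l + 1)) + real l / real (l + 1)"
      using EM_mono[OF n(1) pointwise] by (simp only: EM_add EM_scale EM_const)
    also have "\<dots> \<le> C / real (l + 1) + real l / real (l + 1)"
      using elim(1) by (simp add: divide_right_mono)
    finally show ?case by (simp add: add_divide_distrib)
  qed
  moreover have "(C + real l) / real (l + 1) > 0" using C l_pos by simp
  ultimately show ?thesis by blast
qed

lemma rising_moment_bound:
  "\<exists>C\<ge>0. \<forall>\<^sub>F n in at_top. EM n (\<lambda>M. pochhammer (real M) (q * (l + 1))) \<le> C * real n ^ (l * q)"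
proof (intro exI conjI)
  define A where "A = pochhammer (real (total n_full)) (q * (l + 1))"
  have A: "A \<ge> 0" unfolding A_def using total_pos[of n_full] by (intro pochhammer_nonneg) simp
  then show "A * 3 ^ (l * q) / Q n_full ^ q \<ge> 0" using Q_pos[of n_full] by simp
  show "\<forall>\<^sub>F n in at_top. EM n (\<lambda>M. pochhammer (real M) (q * (l + 1)))
      \<le> A * 3 ^ (l * q) / Q n_full ^ q * real n ^ (l * q)"
  proof (intro eventually_mono[OF eventually_ge_at_top[of "max n_full (m s + l + 1)"]])
    fix n assume n: "max n_full (m s + l + 1) \<le> n"
    have "Q n \<le> (3 * real n) ^ l"
      using Q_upper[of n] total_le_linear[of n] n power_mono[of _ "3 * real n" l] by force
    then have "(Q n / Q n_full) ^ q \<le> ((3 * real n) ^ l / Q n_full) ^ q"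
      using Q_pos[of n] Q_pos[of n_full] by (intro power_mono divide_right_mono) auto
    then have "EM n (\<lambda>M. pochhammer (real M) (q * (l + 1))) \<le> A * ((3 * real n) ^ l / Q n_full) ^ q"
      using EM_rising_factorial_power[of n q] n A unfolding A_def[symmetric]
      by (meson max.boundedE mult_left_mono order_trans)
    also have "\<dots> = A * 3 ^ (l * q) / Q n_full ^ q * real n ^ (l * q)"
      by (simp add: power_divide power_mult_distrib power_mult[symmetric] ac_simps)
    finally show "EM n (\<lambda>M. pochhammer (real M) (q * (l + 1))) \<le> A * 3 ^ (l * q) / Q n_full ^ q * real n ^ (l * q)" .
  qed
qed

text \<open>Upper half of part (a).  Pointwise, (l+1) Y \<le> Y^(l+1) + l with Y = (M / scale n)^q, and
  Y^(l+1) = M^(q(l+1)) / n^(lq) is dominated by the rising factorial.\<close>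

lemma moment_upper: "\<exists>c>0. \<forall>\<^sub>F n in at_top. EM n (\<lambda>M. real M ^ q) \<le> c * scale n ^ q"
proof -
  define p where "p = q * (l + 1)"
  obtain C where C: "C \<ge> 0"
    and ev: "\<forall>\<^sub>F n in at_top. EM n (\<lambda>M. pochhammer (real M) p) \<le> C * real n ^ (l * q)"
    using rising_moment_bound unfolding p_def by blast
  have "\<forall>\<^sub>F n in at_top. EM n (\<lambda>M. real M ^ q) \<le> (C + real l) / real (l + 1) * scale n ^ q"
    using ev eventually_ge_at_top[of "max n_full 1"]
  proof eventually_elim
    case (elim n)
    then have n: "n \<ge> n_full" "n > 0" by auto
    have scale_p: "scale n ^ p = real n ^ (l * q)"
      unfolding p_def power_mult[symmetric] using scale_power_Suc_l[OF n(2)]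
      by (metis mult.commute power_mult)
    define a where "a = scale n ^ q / (real (l + 1) * real n ^ (l * q))"
    define b where "b = scale n ^ q * real l / real (l + 1)"
    have pointwise: "real M ^ q \<le> a * pochhammer (real M) p + b" for M
    proof -
      define Y where "Y = (real M / scale n) ^ q"
      have "real (Suc l) * Y \<le> Y ^ Suc l + real l"
        using scale_pos[OF n(2)] unfolding Y_def by (intro amgm_power) simp
      also have "Y ^ Suc l = (real M / scale n) ^ p"
        unfolding Y_def p_def power_mult by simp
      also have "\<dots> = real M ^ p / real n ^ (l * q)"
        unfolding power_divide scale_p ..
      also have "\<dots> \<le> pochhammer (real M) p / real n ^ (l * q)"
        by (intro divide_right_mono pochhammer_ge_power) auto
      finally have "Y \<le> (pochhammer (real M) p / real n ^ (l * q) + real l) / real (l + 1)"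
        by (simp add: pos_le_divide_eq mult.commute)
      then have "scale n ^ q * Y
          \<le> scale n ^ q * ((pochhammer (real M) p / real n ^ (l * q) + real l) / real (l + 1))"
        using scale_pos[OF n(2)] by (intro mult_left_mono) auto
      moreover have "real M ^ q = scale n ^ q * Y"
        unfolding Y_def using scale_pos[OF n(2)] by (simp add: power_divide)
      moreover have "scale n ^ q * ((pochhammer (real M) p / real n ^ (l * q) + real l) / real (l + 1))
          = a * pochhammer (real M) p + b"
        unfolding a_def b_def by (simp add: add_divide_distrib ring_distribs)
      ultimately show ?thesis by simp
    qed
    have "EM n (\<lambda>M. real M ^ q) \<le> a * EM n (\<lambda>M. pochhammer (real M) p) + b"
      using EM_mono[OF n(1) pointwise] by (simp only: EM_add EM_scale EM_const)
    also have "\<dots> \<le> a * (C * real n ^ (l * q)) + b"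
      using elim(1) scale_pos[OF n(2)] unfolding a_def by (intro add_right_mono mult_left_mono) auto
    also have "a * (C * real n ^ (l * q)) = C * scale n ^ q / real (l + 1)"
      unfolding a_def using n(2) by simp
    also have "C * scale n ^ q / real (l + 1) + b = (C + real l) / real (l + 1) * scale n ^ q"
      unfolding b_def by (simp add: add_divide_distrib algebra_simps)
    finally show ?case .
  qed
  moreover have "(C + real l) / real (l + 1) > 0" using C l_pos by simp
  ultimately show ?thesis by blast
qed

text \<open>Lower half of part (a), from the inverse moment bound: pointwise
  q + 1 \<le> x^q + q/x with x = \<lambda> M / scale n, for a suitable constant \<lambda>.\<close>

lemma moment_lower:
  assumes q: "q \<ge> 1"
  shows "\<exists>c>0. \<forall>\<^sub>F n in at_top. c * scale n ^ q \<le> EM n (\<lambda>M. real M ^ q)"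
proof -
  obtain B where B: "B > 0" and ev: "\<forall>\<^sub>F n in at_top. EM n (\<lambda>M. scale n / real M) \<le> B"
    using inverse_moment_bound by blast
  define lam where "lam = 2 * real q * B / (real q + 1)"
  have lam: "lam > 0" unfolding lam_def using B q by simp
  have "\<forall>\<^sub>F n in at_top. (real q + 1) / 2 / lam ^ q * scale n ^ q \<le> EM n (\<lambda>M. real M ^ q)"
    using ev eventually_ge_at_top[of "max n_full 1"]
  proof eventually_elim
    case (elim n)
    then have n: "n \<ge> n_full" "n > 0" by auto
    have sc: "scale n > 0" by (rule scale_pos[OF n(2)])
    define a where "a = lam ^ q / scale n ^ q"
    define b where "b = real q / lam"
    have pointwise: "real q + 1 \<le> a * real M ^ q + b * (scale n / real M)"
      if M: "M \<ge> total n_full" for M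
    proof -
      have "real M > 0" using M total_full_ge by simp
      then have "real q + 1 \<le> (lam * real M / scale n) ^ q + real q / (lam * real M / scale n)"
        using lam sc by (intro amgm_reciprocal) simp
      also have "\<dots> = a * real M ^ q + b * (scale n / real M)"
        unfolding a_def b_def using lam sc \<open>real M > 0\<close> by (simp add: power_divide power_mult_distrib)
      finally show ?thesis .
    qed
    have "EM n (\<lambda>M. real q + 1) \<le> EM n (\<lambda>M. a * real M ^ q + b * (scale n / real M))"
      by (rule EM_mono[OF n(1) pointwise])
    then have "real q + 1 \<le> a * EM n (\<lambda>M. real M ^ q) + b * EM n (\<lambda>M. scale n / real M)"
      by (simp only: EM_add EM_scale EM_const)
    also have "\<dots> \<le> a * EM n (\<lambda>M. real M ^ q) + b * B"
      using elim(1) lam unfolding b_def by (intro add_left_mono mult_left_mono) auto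
    also have "b * B = (real q + 1) / 2"
      unfolding b_def lam_def using B q by (simp add: field_simps)
    finally have "(real q + 1) / 2 \<le> a * EM n (\<lambda>M. real M ^ q)" by argo
    then show ?case using lam sc unfolding a_def by (simp add: field_simps)
  qed
  moreover have "(real q + 1) / 2 / lam ^ q > 0" using lam by simp
  ultimately show ?thesis by blast
qed

lemma moment_Theta:
  assumes "q \<ge> 1"
  shows "(\<lambda>n. measure_pmf.expectation (urn l s m n) (\<lambda>U. real (Mk k U) ^ q))
           \<in> \<Theta>(\<lambda>n. real n powr (real (q * l) / real (l + 1)))"
proof -
  obtain c1 where c1: "c1 > 0" and lower: "\<forall>\<^sub>F n in at_top. c1 * scale n ^ q \<le> EM n (\<lambda>M. real M ^ q)"
    using moment_lower[OF assms] by blast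
  obtain c2 where c2: "c2 > 0" and upper: "\<forall>\<^sub>F n in at_top. EM n (\<lambda>M. real M ^ q) \<le> c2 * scale n ^ q"
    using moment_upper by blast
  show ?thesis
  proof (rule bigthetaI'[OF c1 c2])
    show "\<forall>\<^sub>F n in at_top.
        c1 * norm (real n powr (real (q * l) / real (l + 1)))
          \<le> norm (measure_pmf.expectation (urn l s m n) (\<lambda>U. real (Mk k U) ^ q)) \<and>
        norm (measure_pmf.expectation (urn l s m n) (\<lambda>U. real (Mk k U) ^ q))
          \<le> c2 * norm (real n powr (real (q * l) / real (l + 1)))"
      using lower upper eventually_gt_at_top[of 0]
    proof eventually_elim
      case (elim n)
      have "real n powr (real (q * l) / real (l + 1)) = scale n ^ q"
        using scale_power[OF elim(3), of q] by simp
      moreover have "scale n ^ q \<ge> 0" using scale_pos[OF elim(3)] by simp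
      moreover have "EM n (\<lambda>M. real M ^ q) \<ge> 0"
        using elim(1) c1 \<open>scale n ^ q \<ge> 0\<close> by (meson mult_nonneg_nonneg less_imp_le order_trans)
      ultimately show ?case using elim(1,2) unfolding EM_def by simp
    qed
  qed
qed

lemma rising_factorial_expectation:
  "\<exists>r. r \<in> O(\<lambda>n. 1 / real n) \<and>
     (\<forall>\<^sub>F n in at_top.
        measure_pmf.expectation (urn l s m n) (\<lambda>U. \<Prod>i\<in>{0..l}. real (Mk k U + i))
        = (real (m s) + real (l + 1) * real (k - s) + real l) * real n ^ l
            * (real (l + 1) / real l) ^ l * (1 + r n))"
proof -
  have "pochhammer (real M) (l + 1) = (\<Prod>i\<in>{0..l}. real (M + i))" for M
    unfolding pochhammer_prod by (simp add: atLeastLessThanSuc_atLeastAtMost)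
  then have "EM n (\<lambda>M. pochhammer (real M) (l + 1))
      = measure_pmf.expectation (urn l s m n) (\<lambda>U. \<Prod>i\<in>{0..l}. real (Mk k U + i))" for n
    unfolding EM_def by simp
  moreover have "real (total n_full) = real (m s) + real (l + 1) * real (k - s)"
    unfolding total_full by (simp only: of_nat_add of_nat_mult)
  ultimately show ?thesis using rising_factorial_asymptotics by simp
qed

lemma inverse_moment_limsup:
  "limsup (\<lambda>n. ereal (measure_pmf.expectation (urn l s m n)
      (\<lambda>U. real n powr (real l / real (l + 1)) / real (Mk k U)))) < \<infinity>"
proof -
  obtain B where "\<forall>\<^sub>F n in at_top. EM n (\<lambda>M. scale n / real M) \<le> B"
    using inverse_moment_bound by blast
  then have "limsup (\<lambda>n. ereal (measure_pmf.expectation (urn l s m n)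
      (\<lambda>U. real n powr (real l / real (l + 1)) / real (Mk k U)))) \<le> ereal B"
    unfolding EM_def scale_def by (intro Limsup_bounded) (auto elim!: eventually_mono)
  also have "ereal B < \<infinity>" by simp
  finally show ?thesis .
qed

end

theorem lemma3p3:
  fixes l s k q :: nat and m :: "nat \<Rightarrow> nat"
  assumes "l \<ge> 1" and "s \<ge> 1"
    and "m 1 \<ge> 1" and "\<And>j. 1 \<le> j \<Longrightarrow> j < s \<Longrightarrow> m (Suc j) - m j \<ge> 1"
    and "k > s" and "q \<ge> 1"
  shows
    "((\<lambda>n. measure_pmf.expectation (urn l s m n) (\<lambda>U. real (Mk k U) ^ q))
       \<in> \<Theta>(\<lambda>n. real n powr (real (q * l) / real (l + 1)))) \<and>
    (\<exists>r. r \<in> O(\<lambda>n. 1 / real n) \<and>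
       (\<forall>\<^sub>F n in at_top.
          measure_pmf.expectation (urn l s m n) (\<lambda>U. \<Prod>i\<in>{0..l}. real (Mk k U + i))
          = (real (m s) + real (l + 1) * real (k - s) + real l) * real n ^ l
              * (real (l + 1) / real l) ^ l * (1 + r n))) \<and>
    limsup (\<lambda>n. ereal (measure_pmf.expectation (urn l s m n)
        (\<lambda>U. real n powr (real l / real (l + 1)) / real (Mk k U)))) < \<infinity>"
proof -
  interpret colour_urn l s k m
    using assms(1-5) by unfold_locales auto
  show ?thesis
    using moment_Theta[OF assms(6)] rising_factorial_expectation inverse_moment_limsup by blast
qed

end
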